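(* Suppose $\lambda+3\lambda C<1$ and there is a constant $M>0$ such that $a_i\le CM$ for all $i\ge1$. Then for every $k\ge 1$, $$\sum_{m=1}^k E_m^k\le M\,\frac{1-\lambda-2\lambda C}{1-\lambda-3\lambda C}.$$
   Context: Let $C>0$ and $0<\lambda<1$ be constants and let $(a_k)_{k\ge 1}$ be a sequence of nonnegative real numbers. Define the doubly indexed array $(E_m^k)_{m\ge 1,\,k\ge 0}$ by $E_m^0=0$ for all $m\ge1$ and, for $k\ge 1$, $$E_1^k=\lambda\big(E_1^{k-1}+2C\,E_1^{k-1}+a_k\big),\qquad E_m^k=\lambda\big(E_m^{k-1}+C\,(E_m^{k-1}+E_{m-1}^{k-1})\big)\ \ (m\ge 2).$$ (Consequently $E_m^k=0$ whenever $m>k$, and $E_1^1=\lambda a_1$.) In the paper, $C$ is the constant of the evolution requirement of the numerical scheme, $\lambda$ the constant of the mesh $\lambda$-rule, and $E_m^k$ the bound on the $m$-th oscillation extreme after $k$ steps. *)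

theory Defs
  imports Complex_Main
begin

text \<open>The array E m k (m >= 1, k >= 0). Index m = 0 is unused (set to 0).
  E m 0 = 0; E 1 (k+1) = lambda (E 1 k + 2 C E 1 k + a (k+1));
  E m (k+1) = lambda (E m k + C (E m k + E (m-1) k)) for m >= 2.\<close>
fun E :: "real \<Rightarrow> real \<Rightarrow> (nat \<Rightarrow> real) \<Rightarrow> nat \<Rightarrow> nat \<Rightarrow> real" where
  "E C lam a 0 k = 0"
| "E C lam a (Suc m) 0 = 0"
| "E C lam a (Suc 0) (Suc k) =
     lam * (E C lam a (Suc 0) k + 2 * C * E C lam a (Suc 0) k + a (Suc k))"
| "E C lam a (Suc (Suc m)) (Suc k) =
     lam * (E C lam a (Suc (Suc m)) k + C * (E C lam a (Suc (Suc m)) k + E C lam a (Suc m) k))"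

end

theory Submission
  imports Defs
begin

(* Write S_n^k = E_1^k + ... + E_n^k for the partial column sums.
   Summing the recursion over m = 1..n gives
     S_n^(k+1) = lam ((1 + C) S_n^k + C E_1^k + C S_(n-1)^k + a_(k+1)),
   and since all entries are nonnegative, E_1^k and S_(n-1)^k are at most S_n^k.
   Hence, if every partial sum at step k is bounded by x and a_i <= A, every
   partial sum at step k+1 is bounded by lam ((1 + 3C) x + A).  So any x >= 0
   with lam ((1 + 3C) x + A) <= x bounds all partial sums at all steps.
   For A = C M the least such x is lam C M / (1 - lam - 3 lam C), and adding M
   to it gives exactly the bound M (1 - lam - 2 lam C) / (1 - lam - 3 lam C). *)

lemma E_nonneg:
  assumes "C \<ge> 0" "lam \<ge> 0" "\<And>i. i \<ge> 1 \<Longrightarrow> a i \<ge> 0"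
  shows "E C lam a m k \<ge> 0"
proof (induction k arbitrary: m)
  case 0
  then show ?case by (cases m) auto
next
  case (Suc k)
  consider "m = 0" | "m = 1" | q where "m = Suc (Suc q)"
    by (metis One_nat_def not0_implies_Suc)
  then show ?case
  proof cases
    case 1
    then show ?thesis by simp
  next
    case 2
    have "a (Suc k) \<ge> 0" using assms(3) by simp
    then show ?thesis using 2 Suc.IH[of 1] assms(1,2) by simp
  next
    case 3
    then show ?thesis using Suc.IH[of "Suc (Suc q)"] Suc.IH[of "Suc q"] assms(1,2) by simp
  qed
qed

lemma E_partial_sum_Suc:
  "(\<Sum>m<Suc n. E C lam a (Suc m) (Suc k)) =
    lam * ((1 + C) * (\<Sum>m<Suc n. E C lam a (Suc m) k) + C * E C lam a 1 k
           + C * (\<Sum>m<n. E C lam a (Suc m) k) + a (Suc k))"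
proof (induction n)
  case 0
  then show ?case by (simp add: algebra_simps)
next
  case (Suc n)
  have "(\<Sum>m<Suc (Suc n). E C lam a (Suc m) (Suc k)) =
        (\<Sum>m<Suc n. E C lam a (Suc m) (Suc k)) + E C lam a (Suc (Suc n)) (Suc k)"
    by simp
  also have "\<dots> = lam * ((1 + C) * (\<Sum>m<Suc (Suc n). E C lam a (Suc m) k) + C * E C lam a 1 k
           + C * (\<Sum>m<Suc n. E C lam a (Suc m) k) + a (Suc k))"
    using Suc by (simp add: algebra_simps)
  finally show ?case .
qed

lemma E_partial_sum_bounded:
  assumes C: "C \<ge> 0" and lam: "lam \<ge> 0"
    and a_nonneg: "\<And>i. i \<ge> 1 \<Longrightarrow> a i \<ge> 0"
    and a_le: "\<And>i. i \<ge> 1 \<Longrightarrow> a i \<le> A"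
    and x: "x \<ge> 0" and invariant: "lam * ((1 + 3 * C) * x + A) \<le> x"
  shows "(\<Sum>m<n. E C lam a (Suc m) k) \<le> x"
proof (induction k arbitrary: n)
  case 0
  then show ?case using x by simp
next
  case (Suc j)
  note nonneg = E_nonneg[OF C lam a_nonneg]
  show ?case
  proof (cases n)
    case 0
    then show ?thesis using x by simp
  next
    case (Suc p)
    let ?S = "\<Sum>m<Suc p. E C lam a (Suc m) j"
    let ?S' = "\<Sum>m<p. E C lam a (Suc m) j"
    have S_le: "?S \<le> x" using Suc.IH .
    have first_le: "E C lam a 1 j \<le> ?S"
      using nonneg sum_nonneg[of "{..<p}" "\<lambda>m. E C lam a (Suc (Suc m)) j"]
      by (simp add: sum.lessThan_Suc_shift del: sum.lessThan_Suc)
    have prefix_le: "?S' \<le> ?S" using nonneg by simp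
    have "(1 + C) * ?S + C * E C lam a 1 j + C * ?S' + a (Suc j) \<le> (1 + 3 * C) * ?S + A"
      using mult_left_mono[OF first_le C] mult_left_mono[OF prefix_le C] a_le[of "Suc j"]
      by (simp add: algebra_simps)
    also have "\<dots> \<le> (1 + 3 * C) * x + A"
      using S_le C by (simp add: mult_left_mono)
    finally have "lam * ((1 + C) * ?S + C * E C lam a 1 j + C * ?S' + a (Suc j))
                    \<le> lam * ((1 + 3 * C) * x + A)"
      using lam by (simp add: mult_left_mono)
    then show ?thesis
      using invariant Suc E_partial_sum_Suc[where n = p and k = j] by simp
  qed
qed

theorem mainTheorem6:
  fixes C lam M :: real and a :: "nat \<Rightarrow> real" and k :: nat
  assumes "C > 0" and "0 < lam" and "lam < 1"
    and "\<And>i. i \<ge> 1 \<Longrightarrow> a i \<ge> 0"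
    and "lam + 3 * lam * C < 1"
    and "M > 0"
    and "\<And>i. i \<ge> 1 \<Longrightarrow> a i \<le> C * M"
    and "k \<ge> 1"
  shows "(\<Sum>m=1..k. E C lam a m k) \<le> M * (1 - lam - 2 * lam * C) / (1 - lam - 3 * lam * C)"
proof -
  define D where "D = 1 - lam - 3 * lam * C"
  have D: "D > 0" using assms(5) by (simp add: D_def)
  define x where "x = lam * C * M / D"
  have x: "x \<ge> 0" using D assms(1,2,6) by (simp add: x_def)
  have fixed_point: "lam * ((1 + 3 * C) * x + C * M) = x"
    using D by (simp add: x_def D_def field_simps)
  have "(\<Sum>m=1..k. E C lam a m k) = (\<Sum>m<k. E C lam a (Suc m) k)"
    using assms(8) by (simp add: sum.atLeast1_atMost_eq)
  also have "\<dots> \<le> x"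
    using E_partial_sum_bounded[where A = "C * M" and x = x] assms(1,2,4,7) x fixed_point by simp
  also have "\<dots> \<le> M + x" using assms(6) by simp
  also have "M + x = M * (1 - lam - 2 * lam * C) / (1 - lam - 3 * lam * C)"
    using D by (simp add: x_def D_def field_simps)
  finally show ?thesis .
qed

end
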